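(* The set of singular points of the collinearity variety $\tilde{C}_P=0$ remains invariant under Euclidean motions, i.e. under maps $(\mathbf{k}'_1,\dots,\mathbf{k}'_6)\mapsto(\mathbf{R}\mathbf{k}'_1+\mathbf{t},\dots,\mathbf{R}\mathbf{k}'_6+\mathbf{t})$ with $\mathbf{R}\in SO(2)$ and $\mathbf{t}\in\mathbb{R}^2$. Moreover, a point of $\tilde{C}_P=0$ is a singular point if and only if $\mathbf{k}'_4=\mathbf{k}'_5=\mathbf{k}'_6$.
   Context: A configuration is $K'=(\mathbf{k}'_1,\dots,\mathbf{k}'_6)$ with $\mathbf{k}'_i=(c_i,d_i)^T\in\mathbb{R}^2$, viewed as a point of $\mathbb{R}^{12}$. The given base has anchor points $(0,0),(x_2,0),(x_3,y_3)$ with real design parameters $x_2\neq0$, $x_3$, $y_3$. Define $C_P=\det\begin{pmatrix}1&1&1\\ c_4&c_5&c_6\\ d_4&d_5&d_6\end{pmatrix}$, $E_B=\|\mathbf{k}'_2-\mathbf{k}'_1\|^2-x_2^2$, $F_1=(c_2-c_1)x_3+(d_1-d_2)y_3+(c_1-c_3)x_2$, $F_2=(d_2-d_1)x_3+(c_2-c_1)y_3+(d_1-d_3)x_2$. The variety $\tilde{C}_P=0$ is the common zero set of $C_P,E_B,F_1,F_2$ in $\mathbb{R}^{12}$ (configurations with collinear platform points whose base is a Euclidean image of the given base). A singular point of $\tilde{C}_P=0$ is a point of it at which the gradients of $C_P,E_B,F_1,F_2$ with respect to $c_1,\dots,c_6,d_1,\dots,d_6$ are linearly dependent. *)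

theory Defs
  imports "HOL-Analysis.Analysis"
begin

text \<open>A configuration K' = (k'_1,...,k'_6), k'_i = (c_i,d_i) in R^2, is an element
  K :: real^2^6 (a point of R^12), with k'_i = K$i, c_i = K$i$1, d_i = K$i$2,
  for the indices i = 1,...,6 of the finite type 6.\<close>

type_synonym config = "real^2^6"

definition cc :: "config \<Rightarrow> 6 \<Rightarrow> real" where "cc K i = K $ i $ 1"
definition dd :: "config \<Rightarrow> 6 \<Rightarrow> real" where "dd K i = K $ i $ 2"

definition C_P :: "config \<Rightarrow> real" where
  "C_P K = det (vector [vector [1, 1, 1],
                         vector [cc K 4, cc K 5, cc K 6],
                         vector [dd K 4, dd K 5, dd K 6]] :: real^3^3)"

definition E_B :: "real \<Rightarrow> config \<Rightarrow> real" where
  "E_B x2 K = (norm (K$2 - K$1))\<^sup>2 - x2\<^sup>2"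

definition F_1 :: "real \<Rightarrow> real \<Rightarrow> real \<Rightarrow> config \<Rightarrow> real" where
  "F_1 x2 x3 y3 K = (cc K 2 - cc K 1) * x3 + (dd K 1 - dd K 2) * y3 + (cc K 1 - cc K 3) * x2"

definition F_2 :: "real \<Rightarrow> real \<Rightarrow> real \<Rightarrow> config \<Rightarrow> real" where
  "F_2 x2 x3 y3 K = (dd K 2 - dd K 1) * x3 + (cc K 2 - cc K 1) * y3 + (dd K 1 - dd K 3) * x2"

definition on_CP_variety :: "real \<Rightarrow> real \<Rightarrow> real \<Rightarrow> config \<Rightarrow> bool" where
  "on_CP_variety x2 x3 y3 K \<longleftrightarrow>
     C_P K = 0 \<and> E_B x2 K = 0 \<and> F_1 x2 x3 y3 K = 0 \<and> F_2 x2 x3 y3 K = 0"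

definition singular_point :: "real \<Rightarrow> real \<Rightarrow> real \<Rightarrow> config \<Rightarrow> bool" where
  "singular_point x2 x3 y3 K \<longleftrightarrow> on_CP_variety x2 x3 y3 K \<and>
     (\<exists>g1 g2 g3 g4 :: config.
        (GDERIV C_P K :> g1) \<and> (GDERIV (E_B x2) K :> g2) \<and>
        (GDERIV (F_1 x2 x3 y3) K :> g3) \<and> (GDERIV (F_2 x2 x3 y3) K :> g4) \<and>
        (\<exists>a1 a2 a3 a4 :: real. (a1, a2, a3, a4) \<noteq> (0, 0, 0, 0) \<and>
           a1 *\<^sub>R g1 + a2 *\<^sub>R g2 + a3 *\<^sub>R g3 + a4 *\<^sub>R g4 = 0))"

definition motion :: "real^2^2 \<Rightarrow> real^2 \<Rightarrow> config \<Rightarrow> config" where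
  "motion R t K = (\<chi> i. R *v (K $ i) + t)"

end

theory Submission
  imports Defs
begin

text \<open>With respect to the coordinates of \<open>k'\<^sub>3\<close> only \<open>F\<^sub>1\<close> and \<open>F\<^sub>2\<close> have nonzero partial derivatives
  (namely \<open>-x\<^sub>2\<close>), and with respect to those of \<open>k'\<^sub>2\<close> only \<open>E\<^sub>B\<close> and the \<open>F\<^sub>i\<close>; on the
  variety \<open>|k'\<^sub>2 - k'\<^sub>1| = |x\<^sub>2| > 0\<close>, so the gradient of \<open>E\<^sub>B\<close> does not vanish there. Hence a
  linear dependence of the four gradients can only be the vanishing of the gradient of \<open>C\<^sub>P\<close>,
  which happens exactly when \<open>k'\<^sub>4 = k'\<^sub>5 = k'\<^sub>6\<close>. A motion multiplies \<open>C\<^sub>P\<close> by \<open>det R = 1\<close>,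
  preserves the distance in \<open>E\<^sub>B\<close>, rotates the vector \<open>(F\<^sub>1, F\<^sub>2)\<close> by \<open>R\<close> and is injective on
  points, so it preserves both the variety and the condition \<open>k'\<^sub>4 = k'\<^sub>5 = k'\<^sub>6\<close>.\<close>

lemma gderiv_unique:
  fixes f :: "'a::real_inner \<Rightarrow> real"
  assumes "GDERIV f x :> D" and "GDERIV f x :> D'"
  shows "D = D'"
proof -
  have "(\<lambda>h. inner h D) = (\<lambda>h. inner h D')"
    using assms unfolding gderiv_def by (rule has_derivative_unique)
  then have "inner (D - D') D = inner (D - D') D'"
    by metis
  then have "inner (D - D') (D - D') = 0"
    by (simp add: inner_diff_right)
  then show ?thesis
    by simp
qed

definition config_axis :: "6 \<Rightarrow> 2 \<Rightarrow> config" where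
  "config_axis i j = axis i (axis j 1)"

lemma config_axis_nth [simp]:
  "config_axis i j $ k $ l = (if i = k \<and> j = l then 1 else 0)"
  by (simp add: config_axis_def axis_def)

lemma inner_config_axis [simp]: "inner K (config_axis i j) = K $ i $ j"
  by (simp add: config_axis_def inner_axis)

lemma has_derivative_cc [derivative_intros]:
  "((\<lambda>K. cc K i) has_derivative (\<lambda>H. cc H i)) (at K)"
  unfolding cc_def
  by (intro bounded_linear.has_derivative[where f = "\<lambda>K::config. K $ i $ 1"]
      bounded_linear_compose[OF bounded_linear_vec_nth bounded_linear_vec_nth] has_derivative_ident)

lemma has_derivative_dd [derivative_intros]:
  "((\<lambda>K. dd K i) has_derivative (\<lambda>H. dd H i)) (at K)"
  unfolding dd_def
  by (intro bounded_linear.has_derivative[where f = "\<lambda>K::config. K $ i $ 2"]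
      bounded_linear_compose[OF bounded_linear_vec_nth bounded_linear_vec_nth] has_derivative_ident)

lemma C_P_eq:
  "C_P K = cc K 5 * dd K 6 - cc K 6 * dd K 5 - cc K 4 * dd K 6 + cc K 6 * dd K 4
     + cc K 4 * dd K 5 - cc K 5 * dd K 4"
  unfolding C_P_def det_3 by (simp add: vector_def algebra_simps)

lemma E_B_eq: "E_B x2 K = (cc K 2 - cc K 1)\<^sup>2 + (dd K 2 - dd K 1)\<^sup>2 - x2\<^sup>2"
  unfolding E_B_def power2_norm_eq_inner inner_vec_def sum_2 cc_def dd_def
  by (simp add: power2_eq_square)

definition grad_C_P :: "config \<Rightarrow> config" where
  "grad_C_P K =
     (dd K 5 - dd K 6) *\<^sub>R config_axis 4 1 + (dd K 6 - dd K 4) *\<^sub>R config_axis 5 1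
   + (dd K 4 - dd K 5) *\<^sub>R config_axis 6 1 + (cc K 6 - cc K 5) *\<^sub>R config_axis 4 2
   + (cc K 4 - cc K 6) *\<^sub>R config_axis 5 2 + (cc K 5 - cc K 4) *\<^sub>R config_axis 6 2"

definition grad_E_B :: "config \<Rightarrow> config" where
  "grad_E_B K =
     (2 * (cc K 2 - cc K 1)) *\<^sub>R (config_axis 2 1 - config_axis 1 1)
   + (2 * (dd K 2 - dd K 1)) *\<^sub>R (config_axis 2 2 - config_axis 1 2)"

definition grad_F_1 :: "real \<Rightarrow> real \<Rightarrow> real \<Rightarrow> config" where
  "grad_F_1 x2 x3 y3 =
     (x2 - x3) *\<^sub>R config_axis 1 1 + y3 *\<^sub>R config_axis 1 2
   + x3 *\<^sub>R config_axis 2 1 - y3 *\<^sub>R config_axis 2 2 - x2 *\<^sub>R config_axis 3 1"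

definition grad_F_2 :: "real \<Rightarrow> real \<Rightarrow> real \<Rightarrow> config" where
  "grad_F_2 x2 x3 y3 =
     (x2 - x3) *\<^sub>R config_axis 1 2 - y3 *\<^sub>R config_axis 1 1
   + x3 *\<^sub>R config_axis 2 2 + y3 *\<^sub>R config_axis 2 1 - x2 *\<^sub>R config_axis 3 2"

lemmas inner_grad_simps =
  inner_add_right inner_scaleR_right inner_config_axis cc_def dd_def

lemma gderiv_C_P: "GDERIV C_P K :> grad_C_P K"
  unfolding gderiv_def C_P_eq[abs_def]
  by (rule derivative_eq_intros | simp)+ (auto simp: grad_C_P_def inner_grad_simps algebra_simps)

lemma gderiv_E_B: "GDERIV (E_B x2) K :> grad_E_B K"
  unfolding gderiv_def E_B_eq[abs_def]
  by (rule derivative_eq_intros | simp)+ (auto simp: grad_E_B_def inner_grad_simps algebra_simps)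

lemma gderiv_F_1: "GDERIV (F_1 x2 x3 y3) K :> grad_F_1 x2 x3 y3"
  unfolding gderiv_def F_1_def[abs_def]
  by (rule derivative_eq_intros | simp)+ (auto simp: grad_F_1_def inner_grad_simps algebra_simps)

lemma gderiv_F_2: "GDERIV (F_2 x2 x3 y3) K :> grad_F_2 x2 x3 y3"
  unfolding gderiv_def F_2_def[abs_def]
  by (rule derivative_eq_intros | simp)+ (auto simp: grad_F_2_def inner_grad_simps algebra_simps)

lemma vec2_eq_iff: "(v::real^2) = w \<longleftrightarrow> v $ 1 = w $ 1 \<and> v $ 2 = w $ 2"
  by (simp add: vec_eq_iff forall_2)

lemma grad_C_P_eq_0_iff: "grad_C_P K = 0 \<longleftrightarrow> K $ 4 = K $ 5 \<and> K $ 5 = K $ 6"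
proof
  assume "grad_C_P K = 0"
  then have "grad_C_P K $ i $ j = 0" for i j
    by simp
  from this[of 4 1] this[of 5 1] this[of 4 2] this[of 5 2] show "K $ 4 = K $ 5 \<and> K $ 5 = K $ 6"
    by (simp add: grad_C_P_def vec2_eq_iff cc_def dd_def)
qed (simp add: grad_C_P_def cc_def dd_def)

lemma grad_dependence_only_C_P:
  assumes "x2 \<noteq> 0" and "E_B x2 K = 0"
    and dep: "a1 *\<^sub>R grad_C_P K + a2 *\<^sub>R grad_E_B K
              + a3 *\<^sub>R grad_F_1 x2 x3 y3 + a4 *\<^sub>R grad_F_2 x2 x3 y3 = 0"
  shows "a2 = 0 \<and> a3 = 0 \<and> a4 = 0"
proof -
  let ?G = "a1 *\<^sub>R grad_C_P K + a2 *\<^sub>R grad_E_B K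
            + a3 *\<^sub>R grad_F_1 x2 x3 y3 + a4 *\<^sub>R grad_F_2 x2 x3 y3"
  have coord: "?G $ i $ j = 0" for i j
    using dep by simp
  have a3: "a3 = 0" and a4: "a4 = 0"
    using coord[of 3 1] coord[of 3 2] \<open>x2 \<noteq> 0\<close>
    by (simp_all add: grad_C_P_def grad_E_B_def grad_F_1_def grad_F_2_def)
  have "a2 * (cc K 2 - cc K 1) = 0" "a2 * (dd K 2 - dd K 1) = 0"
    using coord[of 2 1] coord[of 2 2] a3 a4
    by (simp_all add: grad_C_P_def grad_E_B_def grad_F_1_def grad_F_2_def)
  moreover have "cc K 2 - cc K 1 \<noteq> 0 \<or> dd K 2 - dd K 1 \<noteq> 0"
    using assms(1,2) by (auto simp: E_B_eq)
  ultimately have "a2 = 0"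
    by auto
  with a3 a4 show ?thesis
    by simp
qed

lemma singular_point_iff_grad_C_P_eq_0:
  assumes "x2 \<noteq> 0"
  shows "singular_point x2 x3 y3 K \<longleftrightarrow> on_CP_variety x2 x3 y3 K \<and> grad_C_P K = 0"
proof
  assume "singular_point x2 x3 y3 K"
  then obtain g1 g2 g3 g4 a1 a2 a3 a4 where on: "on_CP_variety x2 x3 y3 K"
    and grads: "GDERIV C_P K :> g1" "GDERIV (E_B x2) K :> g2"
      "GDERIV (F_1 x2 x3 y3) K :> g3" "GDERIV (F_2 x2 x3 y3) K :> g4"
    and nontrivial: "(a1, a2, a3, a4) \<noteq> (0, 0, 0, 0)"
    and dep: "a1 *\<^sub>R g1 + a2 *\<^sub>R g2 + a3 *\<^sub>R g3 + a4 *\<^sub>R g4 = 0"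
    unfolding singular_point_def by (elim conjE exE) (rule that)
  have "g1 = grad_C_P K" "g2 = grad_E_B K" "g3 = grad_F_1 x2 x3 y3" "g4 = grad_F_2 x2 x3 y3"
    using gderiv_unique[OF grads(1) gderiv_C_P] gderiv_unique[OF grads(2) gderiv_E_B]
      gderiv_unique[OF grads(3) gderiv_F_1] gderiv_unique[OF grads(4) gderiv_F_2] by simp_all
  with dep have dep': "a1 *\<^sub>R grad_C_P K + a2 *\<^sub>R grad_E_B K
      + a3 *\<^sub>R grad_F_1 x2 x3 y3 + a4 *\<^sub>R grad_F_2 x2 x3 y3 = 0"
    by simp
  have "a2 = 0 \<and> a3 = 0 \<and> a4 = 0"
    using grad_dependence_only_C_P[OF assms _ dep'] on by (simp add: on_CP_variety_def)
  with nontrivial dep' have "a1 \<noteq> 0" "a1 *\<^sub>R grad_C_P K = 0"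
    by auto
  with on show "on_CP_variety x2 x3 y3 K \<and> grad_C_P K = 0"
    by simp
next
  assume "on_CP_variety x2 x3 y3 K \<and> grad_C_P K = 0"
  moreover have "(1::real, 0::real, 0::real, 0::real) \<noteq> (0, 0, 0, 0)"
    by simp
  ultimately show "singular_point x2 x3 y3 K"
    unfolding singular_point_def using gderiv_C_P gderiv_E_B gderiv_F_1 gderiv_F_2
    by (metis scale_one scale_zero_left add_0)
qed

lemma singular_point_iff:
  assumes "x2 \<noteq> 0"
  shows "singular_point x2 x3 y3 K \<longleftrightarrow>
           on_CP_variety x2 x3 y3 K \<and> K $ 4 = K $ 5 \<and> K $ 5 = K $ 6"
  using singular_point_iff_grad_C_P_eq_0[OF assms] grad_C_P_eq_0_iff by simp

lemma motion_cc_dd: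
  "cc (motion A t K) i = A $ 1 $ 1 * cc K i + A $ 1 $ 2 * dd K i + t $ 1"
  "dd (motion A t K) i = A $ 2 $ 1 * cc K i + A $ 2 $ 2 * dd K i + t $ 2"
  by (simp_all add: motion_def cc_def dd_def matrix_vector_mult_def sum_2)

lemma C_P_motion: "C_P (motion A t K) = det A * C_P K"
  unfolding C_P_eq motion_cc_dd det_2 by (simp add: algebra_simps)

lemma E_B_motion:
  assumes "orthogonal_matrix R"
  shows "E_B x2 (motion R t K) = E_B x2 K"
proof -
  have "motion R t K $ 2 - motion R t K $ 1 = R *v (K $ 2 - K $ 1)"
    by (simp add: motion_def matrix_vector_mult_diff_distrib)
  moreover have "orthogonal_transformation ((*v) R)"
    using assms by (simp add: orthogonal_transformation_matrix)
  ultimately show ?thesis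
    unfolding E_B_def by (simp add: orthogonal_transformation_norm)
qed

lemma rotation_matrix_2_entries:
  assumes "rotation_matrix (R::real^2^2)"
  shows "R $ 1 $ 2 = - R $ 2 $ 1" and "R $ 2 $ 2 = R $ 1 $ 1"
proof -
  have orth: "transpose R ** R = mat 1" and det: "det R = 1"
    using assms unfolding rotation_matrix_def orthogonal_matrix_def by auto
  have "(transpose R ** R) $ i $ j = (mat 1 :: real^2^2) $ i $ j" for i j
    using orth by simp
  from this[of 1 1] this[of 2 2] this[of 1 2]
  have "R$1$1 * R$1$1 + R$2$1 * R$2$1 = 1" "R$1$2 * R$1$2 + R$2$2 * R$2$2 = 1"
    "R$1$1 * R$1$2 + R$2$1 * R$2$2 = 0"
    by (simp_all add: matrix_matrix_mult_def sum_2 transpose_def mat_def)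
  moreover have "R$1$1 * R$2$2 - R$1$2 * R$2$1 = 1"
    using det by (simp add: det_2)
  ultimately have "(R$2$2 - R$1$1)\<^sup>2 + (R$1$2 + R$2$1)\<^sup>2 = 0"
    by (simp add: power2_eq_square algebra_simps)
  then show "R $ 1 $ 2 = - R $ 2 $ 1" "R $ 2 $ 2 = R $ 1 $ 1"
    by (simp_all add: add_nonneg_eq_0_iff)
qed

text \<open>\<open>(F\<^sub>1, F\<^sub>2)\<close> is the complex number \<open>(k'\<^sub>2 - k'\<^sub>1)(x\<^sub>3 + i y\<^sub>3) + (k'\<^sub>1 - k'\<^sub>3) x\<^sub>2\<close>, and
  rotations commute with complex multiplication.\<close>

lemma F_motion:
  assumes "rotation_matrix R"
  shows "(vector [F_1 x2 x3 y3 (motion R t K), F_2 x2 x3 y3 (motion R t K)] :: real^2)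
           = R *v vector [F_1 x2 x3 y3 K, F_2 x2 x3 y3 K]"
  unfolding vec2_eq_iff F_1_def F_2_def motion_cc_dd
  by (simp add: matrix_vector_mult_def sum_2 rotation_matrix_2_entries[OF assms] algebra_simps)

lemma orthogonal_matrix_mult_eq_iff:
  fixes R :: "real^'n^'n"
  assumes "orthogonal_matrix R"
  shows "R *v x = R *v y \<longleftrightarrow> x = y"
proof -
  have "orthogonal_transformation ((*v) R)"
    using assms by (simp add: orthogonal_transformation_matrix)
  then show ?thesis
    using orthogonal_transformation_inj by (auto dest: injD)
qed

lemma on_CP_variety_motion:
  assumes "rotation_matrix R"
  shows "on_CP_variety x2 x3 y3 (motion R t K) \<longleftrightarrow> on_CP_variety x2 x3 y3 K"
proof -
  have orth: "orthogonal_matrix R" and "det R = 1"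
    using assms by (auto simp: rotation_matrix_def)
  have "F_1 x2 x3 y3 (motion R t K) = 0 \<and> F_2 x2 x3 y3 (motion R t K) = 0 \<longleftrightarrow>
          (vector [F_1 x2 x3 y3 (motion R t K), F_2 x2 x3 y3 (motion R t K)] :: real^2) = 0"
    by (simp add: vec2_eq_iff)
  also have "\<dots> \<longleftrightarrow> R *v vector [F_1 x2 x3 y3 K, F_2 x2 x3 y3 K] = R *v 0"
    by (simp add: F_motion[OF assms])
  also have "\<dots> \<longleftrightarrow> F_1 x2 x3 y3 K = 0 \<and> F_2 x2 x3 y3 K = 0"
    unfolding orthogonal_matrix_mult_eq_iff[OF orth] by (simp add: vec2_eq_iff)
  finally show ?thesis
    unfolding on_CP_variety_def C_P_motion E_B_motion[OF orth] \<open>det R = 1\<close> by simp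
qed

lemma motion_nth_eq_iff:
  assumes "orthogonal_matrix R"
  shows "motion R t K $ i = motion R t K $ j \<longleftrightarrow> K $ i = K $ j"
  by (simp add: motion_def orthogonal_matrix_mult_eq_iff[OF assms])

theorem theorem9:
  fixes x2 x3 y3 :: real
  assumes "x2 \<noteq> 0"
  shows "(\<forall>(R :: real^2^2) (t :: real^2) (K :: config). rotation_matrix R \<longrightarrow>
            (K \<in> {K. singular_point x2 x3 y3 K} \<longleftrightarrow>
             motion R t K \<in> {K. singular_point x2 x3 y3 K}))
       \<and> (\<forall>K :: config. on_CP_variety x2 x3 y3 K \<longrightarrow>
            (singular_point x2 x3 y3 K \<longleftrightarrow> K $ 4 = K $ 5 \<and> K $ 5 = K $ 6))"
proof (intro conjI allI impI)
  fix R :: "real^2^2" and t :: "real^2" and K :: config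
  assume R: "rotation_matrix R"
  then have "orthogonal_matrix R"
    by (simp add: rotation_matrix_def)
  then show "K \<in> {K. singular_point x2 x3 y3 K} \<longleftrightarrow>
             motion R t K \<in> {K. singular_point x2 x3 y3 K}"
    by (simp add: singular_point_iff[OF assms] on_CP_variety_motion[OF R] motion_nth_eq_iff)
next
  fix K :: config
  assume "on_CP_variety x2 x3 y3 K"
  then show "singular_point x2 x3 y3 K \<longleftrightarrow> K $ 4 = K $ 5 \<and> K $ 5 = K $ 6"
    by (simp add: singular_point_iff[OF assms])
qed

end
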